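(* There exists a QCQP in $N=2$ variables with $m=2$ constraints such that: Assumptions A and B hold; the quadratic eigenvalue multiplicity is $k=1$; $k\ge\operatorname{affdim}(\{b(\gamma):\gamma\in\mathcal F\})+1$ for every semidefinite face $\mathcal F$ of $\Gamma$; but $\mathrm{Opt}\neq\mathrm{Opt}_{\mathrm{SDP}}$ (and hence $\operatorname{conv}(\mathcal D)\neq\mathcal D_{\mathrm{SDP}}$).
   Context: A QCQP is given by integers $N\ge 1$, $m_I,m_E\ge 0$, $m:=m_I+m_E\ge 1$ and, for $i\in[0,m]$ ($[a,b]=\{a,\dots,b\}$, $[n]=[1,n]$), $q_i(x)=x^\top A_ix+2b_i^\top x+c_i$ with $A_i\in\mathbb S^N$, $b_i\in\mathbb R^N$, $c_i\in\mathbb R$. $\mathrm{Opt}:=\inf\{q_0(x): q_i(x)\le 0\ \forall i\in[m_I],\ q_i(x)=0\ \forall i\in[m_I+1,m]\}$; $\mathcal D:=\{(x,t): q_0(x)\le 2t$ and the same constraints$\}$. With $Q_i=\begin{pmatrix}c_i& b_i^\top\\ b_i& A_i\end{pmatrix}$: $\mathrm{Opt}_{\mathrm{SDP}}:=\inf\{\langle Q_0,Y\rangle: Y=\begin{pmatrix}1&x^\top\\ x& X\end{pmatrix}\succeq 0,\ X\in\mathbb S^N,\ \langle Q_i,Y\rangle\le 0\ \forall i\in[m_I],\ \langle Q_i,Y\rangle=0\ \forall i\in[m_I+1,m]\}$; $\mathcal D_{\mathrm{SDP}}:=\{(x,t):\exists X$ with $Y\succeq0$, $\langle Q_0,Y\rangle\le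 2t$ and the same constraints$\}$. $A(\gamma)=A_0+\sum\gamma_iA_i$, $b(\gamma)=b_0+\sum\gamma_ib_i$, $q(\gamma,x)=q_0(x)+\sum\gamma_iq_i(x)$; $\Gamma:=\{\gamma\in\mathbb R^m: A(\gamma)\succeq0,\ \gamma_i\ge0\ \forall i\in[m_I]\}$. Assumption A: the QCQP feasible set is nonempty and some $\gamma^*$ with $\gamma^*_i\ge0$ ($i\in[m_I]$) has $A(\gamma^* )\succ0$. Assumption B: for every $\hat x$, if $\sup_{\gamma\in\Gamma}q(\gamma,\hat x)$ is finite it is attained. A nonempty face $\mathcal F$ of $\Gamma$ is semidefinite if no $\gamma\in\mathcal F$ has $A(\gamma)\succ0$. The quadratic eigenvalue multiplicity is the largest integer $k$ (with $N=nk$) such that each $A_i=I_k\otimes\mathcal A_i$ for some $\mathcal A_i\in\mathbb S^n$. $\operatorname{affdim}$ is the dimension of the affine hull. *)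

theory Defs
  imports "HOL-Analysis.Analysis" "HOL-Library.Numeral_Type"
begin

text \<open>A QCQP with variable index type 'n (N = CARD('n)) and constraint index type 'm
 (m = CARD('m)).\<close>

definition psd :: "real^'k^'k \<Rightarrow> bool" where
  "psd M \<longleftrightarrow> transpose M = M \<and> (\<forall>v. 0 \<le> v \<bullet> (M *v v))"

definition pd :: "real^'k^'k \<Rightarrow> bool" where
  "pd M \<longleftrightarrow> transpose M = M \<and> (\<forall>v. v \<noteq> 0 \<longrightarrow> 0 < v \<bullet> (M *v v))"

definition qf :: "real^'n^'n \<Rightarrow> real^'n \<Rightarrow> real \<Rightarrow> real^'n \<Rightarrow> real" where
  "qf A b c x = x \<bullet> (A *v x) + 2 * (b \<bullet> x) + c"

definition qcqp_feasible ::
  "('m \<Rightarrow> real^'n^'n) \<Rightarrow> ('m \<Rightarrow> real^'n) \<Rightarrow> ('m \<Rightarrow> real) \<Rightarrow> 'm set \<Rightarrow> (real^'n) set" where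
  "qcqp_feasible A b c I = {x. \<forall>i. (i \<in> I \<longrightarrow> qf (A i) (b i) (c i) x \<le> 0)
                                  \<and> (i \<notin> I \<longrightarrow> qf (A i) (b i) (c i) x = 0)}"

definition Opt where
  "Opt A0 b0 c0 A b c I = Inf ((\<lambda>x. ereal (qf A0 b0 c0 x)) ` qcqp_feasible A b c I)"

definition Dset :: "real^'n^'n \<Rightarrow> real^'n \<Rightarrow> real \<Rightarrow> ('m \<Rightarrow> real^'n^'n) \<Rightarrow> ('m \<Rightarrow> real^'n)
    \<Rightarrow> ('m \<Rightarrow> real) \<Rightarrow> 'm set \<Rightarrow> ((real^'n) \<times> real) set" where
  "Dset A0 b0 c0 A b c I = {(x,t). qf A0 b0 c0 x \<le> 2 * t \<and> x \<in> qcqp_feasible A b c I}"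

text \<open>Block matrices indexed by 'n option: None is the extra first row/column.\<close>
definition Qmat :: "real^'n^'n \<Rightarrow> real^'n \<Rightarrow> real \<Rightarrow> real^('n option)^('n option)" where
  "Qmat A b c = (\<chi> p q. case (p, q) of (None, None) \<Rightarrow> c | (None, Some j) \<Rightarrow> b $ j
      | (Some i, None) \<Rightarrow> b $ i | (Some i, Some j) \<Rightarrow> A $ i $ j)"

definition Ymat :: "real^'n \<Rightarrow> real^'n^'n \<Rightarrow> real^('n option)^('n option)" where
  "Ymat x X = Qmat X x 1"

definition frob :: "real^'k^'k \<Rightarrow> real^'k^'k \<Rightarrow> real" where
  "frob M Y = (\<Sum>p\<in>UNIV. \<Sum>q\<in>UNIV. M $ p $ q * Y $ p $ q)"

definition sdp_feasible ::
  "('m \<Rightarrow> real^'n^'n) \<Rightarrow> ('m \<Rightarrow> real^'n) \<Rightarrow> ('m \<Rightarrow> real) \<Rightarrow> 'm set \<Rightarrow> ((real^'n) \<times> (real^'n^'n)) set" where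
  "sdp_feasible A b c I = {(x,X). transpose X = X \<and> psd (Ymat x X)
      \<and> (\<forall>i. (i \<in> I \<longrightarrow> frob (Qmat (A i) (b i) (c i)) (Ymat x X) \<le> 0)
            \<and> (i \<notin> I \<longrightarrow> frob (Qmat (A i) (b i) (c i)) (Ymat x X) = 0))}"

definition Opt_SDP where
  "Opt_SDP A0 b0 c0 A b c I =
     Inf ((\<lambda>(x,X). ereal (frob (Qmat A0 b0 c0) (Ymat x X))) ` sdp_feasible A b c I)"

definition D_SDP :: "real^'n^'n \<Rightarrow> real^'n \<Rightarrow> real \<Rightarrow> ('m \<Rightarrow> real^'n^'n) \<Rightarrow> ('m \<Rightarrow> real^'n)
    \<Rightarrow> ('m \<Rightarrow> real) \<Rightarrow> 'm set \<Rightarrow> ((real^'n) \<times> real) set" where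
  "D_SDP A0 b0 c0 A b c I = {(x,t). \<exists>X. (x,X) \<in> sdp_feasible A b c I
       \<and> frob (Qmat A0 b0 c0) (Ymat x X) \<le> 2 * t}"

definition Agam :: "real^'n^'n \<Rightarrow> ('m::finite \<Rightarrow> real^'n^'n) \<Rightarrow> real^'m \<Rightarrow> real^'n^'n" where
  "Agam A0 A \<gamma> = A0 + (\<Sum>i\<in>UNIV. \<gamma> $ i *\<^sub>R A i)"

definition bgam :: "real^'n \<Rightarrow> ('m::finite \<Rightarrow> real^'n) \<Rightarrow> real^'m \<Rightarrow> real^'n" where
  "bgam b0 b \<gamma> = b0 + (\<Sum>i\<in>UNIV. \<gamma> $ i *\<^sub>R b i)"

definition qgam where
  "qgam A0 b0 c0 A b c \<gamma> x = qf A0 b0 c0 x + (\<Sum>i\<in>UNIV. \<gamma> $ i * qf (A i) (b i) (c i) x)"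

definition Gamma :: "real^'n^'n \<Rightarrow> ('m::finite \<Rightarrow> real^'n^'n) \<Rightarrow> 'm set \<Rightarrow> (real^'m) set" where
  "Gamma A0 A I = {\<gamma>. psd (Agam A0 A \<gamma>) \<and> (\<forall>i\<in>I. 0 \<le> \<gamma> $ i)}"

definition assumptionA where
  "assumptionA A0 A b c I \<longleftrightarrow> qcqp_feasible A b c I \<noteq> {}
     \<and> (\<exists>\<gamma>. (\<forall>i\<in>I. 0 \<le> \<gamma> $ i) \<and> pd (Agam A0 A \<gamma>))"

definition assumptionB where
  "assumptionB A0 b0 c0 A b c I \<longleftrightarrow> (\<forall>x. Gamma A0 A I \<noteq> {}
      \<and> bdd_above ((\<lambda>\<gamma>. qgam A0 b0 c0 A b c \<gamma> x) ` Gamma A0 A I)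
      \<longrightarrow> (\<exists>\<gamma>\<in>Gamma A0 A I. qgam A0 b0 c0 A b c \<gamma> x
             = (SUP g\<in>Gamma A0 A I. qgam A0 b0 c0 A b c g x)))"

definition semidefinite_face where
  "semidefinite_face A0 A I F \<longleftrightarrow> F \<noteq> {} \<and> F face_of Gamma A0 A I
      \<and> (\<forall>\<gamma>\<in>F. \<not> pd (Agam A0 A \<gamma>))"

text \<open>Coordinates are ordered via the canonical enumeration of the index type:
 coordinate r (0-based) is enum ! r.  M = I_k \<otimes> Mc means entry (r,s) equals
 Mc (r mod n) (s mod n) if r div n = s div n and 0 otherwise, where n = N div k.\<close>
definition is_kron_identity :: "nat \<Rightarrow> ((real, 'n::enum) vec, 'n) vec \<Rightarrow> bool" where
  "is_kron_identity k M \<longleftrightarrow> (let N = CARD('n); n = N div k in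
     \<exists>Mc :: nat \<Rightarrow> nat \<Rightarrow> real. (\<forall>r<n. \<forall>s<n. Mc r s = Mc s r) \<and>
       (\<forall>r<N. \<forall>s<N. M $ (Enum.enum ! r) $ (Enum.enum ! s)
            = (if r div n = s div n then Mc (r mod n) (s mod n) else 0)))"

definition mult_ok :: "nat \<Rightarrow> ((real, 'n::enum) vec, 'n) vec \<Rightarrow> ('m \<Rightarrow> ((real, 'n) vec, 'n) vec) \<Rightarrow> bool" where
  "mult_ok k A0 A \<longleftrightarrow> k \<ge> 1 \<and> k dvd CARD('n) \<and> is_kron_identity k A0
      \<and> (\<forall>i. is_kron_identity k (A i))"

definition eig_multiplicity :: "((real, 'n::enum) vec, 'n) vec \<Rightarrow> ('m \<Rightarrow> ((real, 'n) vec, 'n) vec) \<Rightarrow> nat" where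
  "eig_multiplicity A0 A = (GREATEST k. mult_ok k A0 A)"

end

theory Submission
  imports Defs "HOL-Computational_Algebra.Primes"
begin

text \<open>The two equality constraints x1^2 - x2^2 = 1 and 2 x1 x2 = 0 say (x1 + i x2)^2 = 1, so the
  feasible points are (1, 0) and (-1, 0), where the objective x1^2 + x2^2 + 2 x2 equals 1.  The
  pencil A(g) = [[1 + g1, g2], [g2, 1 - g1]] is positive definite at g = 0 and positive
  semidefinite exactly on the unit disc, which is compact, so Assumption B holds; since the
  constraints have no linear part, b(g) is constant and every face condition holds with k = 1.
  Yet the moment matrix with x = (0, -1/2) and X = diag(5/4, 1/4) satisfies both lifted
  constraints and gives the SDP objective the value 1/2.\<close>

lemma inner_mult_vec_2:
  fixes M :: "real^2^2" and v :: "real^2"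
  shows "v \<bullet> (M *v v) = M$1$1 * v$1 * v$1 + (M$1$2 + M$2$1) * v$1 * v$2 + M$2$2 * v$2 * v$2"
  by (simp add: inner_vec_def matrix_vector_mult_def sum_2 algebra_simps)

lemma transpose_eq_iff_2: "transpose (M :: 'a^2^2) = M \<longleftrightarrow> M$1$2 = M$2$1"
  by (auto simp: transpose_def vec_eq_iff forall_2)

lemma binary_quadratic_nonneg_iff:
  fixes a b c :: real
  shows "(\<forall>s t. 0 \<le> a * s * s + 2 * b * s * t + c * t * t) \<longleftrightarrow> 0 \<le> a \<and> 0 \<le> c \<and> b\<^sup>2 \<le> a * c"
proof
  assume q: "\<forall>s t. 0 \<le> a * s * s + 2 * b * s * t + c * t * t"
  have a: "0 \<le> a" and c: "0 \<le> c" using q[rule_format, of 1 0] q[rule_format, of 0 1] by simp_all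
  have by_a: "0 \<le> a * (a * c - b\<^sup>2)"
    using q[rule_format, of b "-a"] by (simp add: power2_eq_square algebra_simps)
  have by_c: "0 \<le> c * (a * c - b\<^sup>2)"
    using q[rule_format, of c "-b"] by (simp add: power2_eq_square algebra_simps)
  consider "0 < a" | "0 < c" | "a = 0" "c = 0"
    using a c by linarith
  then have "b\<^sup>2 \<le> a * c"
  proof cases
    case 3
    then have "0 \<le> - 2 * b\<^sup>2"
      using q[rule_format, of 1 "-b"] by (simp add: power2_eq_square)
    then have "b\<^sup>2 \<le> 0"
      by linarith
    with 3 show ?thesis
      by simp
  qed (use by_a by_c in \<open>metis diff_ge_0_iff_ge mult_le_cancel_left_pos mult_zero_right\<close>)+
  with a c show "0 \<le> a \<and> 0 \<le> c \<and> b\<^sup>2 \<le> a * c" by simp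
next
  assume abc: "0 \<le> a \<and> 0 \<le> c \<and> b\<^sup>2 \<le> a * c"
  show "\<forall>s t. 0 \<le> a * s * s + 2 * b * s * t + c * t * t"
  proof (intro allI)
    fix s t :: real
    show "0 \<le> a * s * s + 2 * b * s * t + c * t * t"
    proof (cases "a = 0")
      case True
      then show ?thesis
        using abc by (simp add: mult.assoc mult_nonneg_nonneg)
    next
      case False
      have "0 \<le> (a * s + b * t)\<^sup>2 + (a * c - b\<^sup>2) * t\<^sup>2"
        using abc by simp
      also have "\<dots> = a * (a * s * s + 2 * b * s * t + c * t * t)"
        by (simp add: power2_eq_square algebra_simps)
      finally show ?thesis
        using abc False by (metis less_eq_real_def mult_le_cancel_left_pos mult_zero_right)
    qed
  qed
qed

lemma psd_2_iff:
  fixes M :: "real^2^2"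
  shows "psd M \<longleftrightarrow> M$1$2 = M$2$1 \<and> 0 \<le> M$1$1 \<and> 0 \<le> M$2$2 \<and> (M$1$2)\<^sup>2 \<le> M$1$1 * M$2$2"
proof -
  have "M$1$2 = M$2$1 \<Longrightarrow> (\<forall>v::real^2. 0 \<le> v \<bullet> (M *v v))
          \<longleftrightarrow> (\<forall>s t. 0 \<le> M$1$1 * s * s + 2 * M$1$2 * s * t + M$2$2 * t * t)"
    by (simp add: forall_vector_2 inner_mult_vec_2)
  then show ?thesis
    unfolding psd_def transpose_eq_iff_2 binary_quadratic_nonneg_iff by blast
qed

lemma pd_mat_1: "pd (mat 1 :: real^'n^'n)"
  by (simp add: pd_def transpose_mat)

lemma Agam_0: "Agam A0 A 0 = A0"
  by (simp add: Agam_def)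

lemma bgam_image_eq:
  assumes "\<forall>i. b i = 0" "F \<noteq> {}"
  shows "bgam b0 b ` F = {b0}"
  using assms by (auto simp: bgam_def)

lemma assumptionB_if_compact_Gamma:
  assumes "compact (Gamma A0 A I)"
  shows "assumptionB A0 b0 c0 A b c I"
  unfolding assumptionB_def
proof (intro allI impI)
  fix x
  let ?f = "\<lambda>\<gamma>. qgam A0 b0 c0 A b c \<gamma> x"
  assume "Gamma A0 A I \<noteq> {} \<and> bdd_above (?f ` Gamma A0 A I)"
  moreover have "continuous_on (Gamma A0 A I) ?f"
    unfolding qgam_def by (intro continuous_intros)
  ultimately obtain \<gamma> where \<gamma>: "\<gamma> \<in> Gamma A0 A I" "\<forall>g\<in>Gamma A0 A I. ?f g \<le> ?f \<gamma>"
    using continuous_attains_sup[OF assms] by blast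
  then have "(SUP g\<in>Gamma A0 A I. ?f g) = ?f \<gamma>"
    by (intro cSup_eq_maximum) auto
  with \<gamma> show "\<exists>\<gamma>\<in>Gamma A0 A I. ?f \<gamma> = (SUP g\<in>Gamma A0 A I. ?f g)"
    by auto
qed

lemma Opt_ge:
  assumes "\<And>x. x \<in> qcqp_feasible A b c I \<Longrightarrow> v \<le> qf A0 b0 c0 x"
  shows "ereal v \<le> Opt A0 b0 c0 A b c I"
  unfolding Opt_def by (rule Inf_greatest) (auto intro: assms)

lemma Opt_SDP_le:
  assumes "(x, X) \<in> sdp_feasible A b c I"
  shows "Opt_SDP A0 b0 c0 A b c I \<le> ereal (frob (Qmat A0 b0 c0) (Ymat x X))"
  unfolding Opt_SDP_def using assms by (force intro: Inf_lower)

lemma convex_hull_Dset_subset: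
  assumes "\<And>x. x \<in> qcqp_feasible A b c I \<Longrightarrow> v \<le> qf A0 b0 c0 x"
  shows "convex hull Dset A0 b0 c0 A b c I \<subseteq> {(x, t). v \<le> 2 * t}"
proof (rule hull_minimal)
  show "Dset A0 b0 c0 A b c I \<subseteq> {(x, t). v \<le> 2 * t}"
    unfolding Dset_def using assms by force
  have "{(x, t). v \<le> 2 * t} = {p :: (real^'n) \<times> real. (0, 2) \<bullet> p \<ge> v}"
    by auto
  then show "convex {(x :: real^'n, t). v \<le> 2 * t}"
    using convex_halfspace_ge by metis
qed

lemma sum_UNIV_option: "(\<Sum>p\<in>UNIV. f p) = f None + (\<Sum>i\<in>(UNIV :: 'a::finite set). f (Some i))"
  unfolding UNIV_option_conv by (simp add: sum.reindex)

lemma frob_Qmat_Ymat: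
  "frob (Qmat A b c) (Ymat x X) = c + 2 * (b \<bullet> x) + (\<Sum>i\<in>UNIV. \<Sum>j\<in>UNIV. A$i$j * X$i$j)"
  unfolding frob_def sum_UNIV_option Ymat_def Qmat_def by (simp add: sum.distrib inner_vec_def)

lemma is_kron_identity_1:
  fixes M :: "((real, 'n::enum) vec, 'n) vec"
  assumes "transpose M = M"
  shows "is_kron_identity 1 M"
proof -
  have "M $ i $ j = transpose M $ j $ i" for i j
    by (simp add: transpose_def)
  then have "M $ i $ j = M $ j $ i" for i j
    using assms by simp
  then show ?thesis
    unfolding is_kron_identity_def Let_def
    by (intro exI[of _ "\<lambda>r s. M $ (Enum.enum ! r) $ (Enum.enum ! s)"]) simp
qed

lemma is_kron_identity_CARD_diag:
  fixes M :: "((real, 'n::enum) vec, 'n) vec"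
  assumes "is_kron_identity CARD('n) M"
  shows "M $ i $ i = M $ j $ j"
proof -
  obtain Mc :: "nat \<Rightarrow> nat \<Rightarrow> real" where Mc: "\<forall>r<CARD('n). \<forall>s<CARD('n).
      M $ (Enum.enum ! r) $ (Enum.enum ! s)
      = (if r div (CARD('n) div CARD('n)) = s div (CARD('n) div CARD('n))
         then Mc (r mod (CARD('n) div CARD('n))) (s mod (CARD('n) div CARD('n))) else 0)"
    using assms unfolding is_kron_identity_def Let_def by blast
  then have diag: "M $ (Enum.enum ! r) $ (Enum.enum ! r) = Mc 0 0" if "r < CARD('n)" for r
    using that by simp
  have "\<exists>r<CARD('n). k = Enum.enum ! r" for k :: 'n
  proof -
    have "k \<in> set Enum.enum"
      by (simp add: UNIV_enum[symmetric])
    then show ?thesis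
      by (auto simp: in_set_conv_nth card_UNIV_length_enum)
  qed
  with diag show ?thesis
    by metis
qed

lemma eig_multiplicity_eq_1:
  fixes A0 :: "((real, 'n::enum) vec, 'n) vec" and A :: "'m \<Rightarrow> ((real, 'n) vec, 'n) vec"
  assumes "prime CARD('n)" "transpose A0 = A0" "\<forall>i. transpose (A i) = A i"
    and "A l $ p $ p \<noteq> A l $ q $ q"
  shows "eig_multiplicity A0 A = 1"
  unfolding eig_multiplicity_def
proof (rule Greatest_equality)
  show "mult_ok 1 A0 A"
    using is_kron_identity_1[OF assms(2)] is_kron_identity_1[OF assms(3)[rule_format]]
    by (simp add: mult_ok_def)
next
  fix k assume "mult_ok k A0 A"
  then have "k dvd CARD('n)" "is_kron_identity k (A l)"
    by (auto simp: mult_ok_def)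
  have "k = 1 \<or> k = CARD('n)"
    using assms(1) \<open>k dvd CARD('n)\<close> by (simp add: prime_nat_iff)
  moreover have "k \<noteq> CARD('n)"
    using assms(4) is_kron_identity_CARD_diag \<open>is_kron_identity k (A l)\<close> by blast
  ultimately show "k \<le> 1"
    by simp
qed

definition ex_A0 :: "real^2^2" where
  "ex_A0 = mat 1"

definition ex_A :: "2 \<Rightarrow> real^2^2" where
  "ex_A i = (if i = 1 then (\<chi> r s. if r = s then (if r = 1 then 1 else -1) else 0)
             else (\<chi> r s. if r = s then 0 else 1))"

definition ex_b0 :: "real^2" where
  "ex_b0 = vector [0, 1]"

definition ex_b :: "2 \<Rightarrow> real^2" where
  "ex_b i = 0"

definition ex_c :: "2 \<Rightarrow> real" where
  "ex_c i = (if i = 1 then -1 else 0)"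

lemma ex_A_symmetric: "transpose (ex_A i) = ex_A i"
  by (simp add: ex_A_def transpose_eq_iff_2)

lemma Agam_ex:
  "Agam ex_A0 ex_A \<gamma> $1$1 = 1 + \<gamma>$1" "Agam ex_A0 ex_A \<gamma> $1$2 = \<gamma>$2"
  "Agam ex_A0 ex_A \<gamma> $2$1 = \<gamma>$2" "Agam ex_A0 ex_A \<gamma> $2$2 = 1 - \<gamma>$1"
  by (simp_all add: Agam_def sum_2 ex_A0_def ex_A_def mat_def)

lemma Gamma_ex: "Gamma ex_A0 ex_A {} = cball 0 1"
proof -
  have "psd (Agam ex_A0 ex_A \<gamma>) \<longleftrightarrow> norm \<gamma> \<le> 1" for \<gamma> :: "real^2"
  proof -
    have "psd (Agam ex_A0 ex_A \<gamma>) \<longleftrightarrow> \<bar>\<gamma>$1\<bar> \<le> 1 \<and> (\<gamma>$2)\<^sup>2 \<le> 1 - (\<gamma>$1)\<^sup>2"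
      unfolding psd_2_iff Agam_ex by (auto simp: power2_eq_square algebra_simps abs_le_iff)
    also have "\<dots> \<longleftrightarrow> (\<gamma>$1)\<^sup>2 + (\<gamma>$2)\<^sup>2 \<le> 1"
      using zero_le_power2[of "\<gamma>$2"] abs_square_le_1[of "\<gamma>$1"] by linarith
    also have "\<dots> \<longleftrightarrow> norm \<gamma> \<le> 1"
      by (simp add: norm_vec_def L2_set_def sum_2)
    finally show ?thesis .
  qed
  then show ?thesis
    unfolding Gamma_def by (simp add: set_eq_iff mem_cball_0)
qed

lemma qf_ex:
  "qf ex_A0 ex_b0 0 x = (x$1)\<^sup>2 + (x$2)\<^sup>2 + 2 * x$2"
  "qf (ex_A 1) (ex_b 1) (ex_c 1) x = (x$1)\<^sup>2 - (x$2)\<^sup>2 - 1"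
  "qf (ex_A 2) (ex_b 2) (ex_c 2) x = 2 * x$1 * x$2"
  unfolding qf_def inner_mult_vec_2 by (simp_all add: inner_vec_def sum_2 ex_A0_def mat_def ex_A_def ex_b0_def
      ex_b_def ex_c_def power2_eq_square algebra_simps)

lemma qcqp_feasible_ex_value:
  assumes "x \<in> qcqp_feasible ex_A ex_b ex_c {}"
  shows "qf ex_A0 ex_b0 0 x = 1"
proof -
  have "qf (ex_A i) (ex_b i) (ex_c i) x = 0" for i
    using assms by (simp add: qcqp_feasible_def)
  from this[of 1] this[of 2] have hyperbola: "(x$1)\<^sup>2 - (x$2)\<^sup>2 = 1" and "x$1 * x$2 = 0"
    by (simp_all add: qf_ex)
  have "x$2 = 0"
  proof (rule ccontr)
    assume "x$2 \<noteq> 0"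
    with \<open>x$1 * x$2 = 0\<close> have "x$1 = 0"
      by simp
    with hyperbola have "(x$2)\<^sup>2 = -1"
      by simp
    then show False
      using zero_le_power2[of "x$2"] by linarith
  qed
  with hyperbola show ?thesis
    by (simp add: qf_ex)
qed

lemma qcqp_feasible_ex_nonempty: "vector [1, 0] \<in> qcqp_feasible ex_A ex_b ex_c {}"
  by (simp add: qcqp_feasible_def forall_2 qf_ex)

definition ex_x :: "real^2" where
  "ex_x = vector [0, -1/2]"

definition ex_X :: "real^2^2" where
  "ex_X = (\<chi> i j. if i = j then (if i = 1 then 5/4 else 1/4) else 0)"

lemma sdp_feasible_ex: "(ex_x, ex_X) \<in> sdp_feasible ex_A ex_b ex_c {}"
proof -
  have "v \<bullet> (Ymat ex_x ex_X *v v) = (v$None - v$Some 2 / 2)\<^sup>2 + 5/4 * (v$Some 1)\<^sup>2" for v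
    by (simp add: inner_vec_def matrix_vector_mult_def sum_UNIV_option sum_2 Ymat_def Qmat_def
        ex_x_def ex_X_def power2_eq_square algebra_simps)
  moreover have "transpose (Ymat ex_x ex_X) = Ymat ex_x ex_X"
    by (auto simp: transpose_def vec_eq_iff Ymat_def Qmat_def ex_x_def ex_X_def split: option.splits)
  ultimately have "psd (Ymat ex_x ex_X)"
    by (simp add: psd_def)
  moreover have "frob (Qmat (ex_A i) (ex_b i) (ex_c i)) (Ymat ex_x ex_X) = 0" for i
    using exhaust_2[of i]
    by (auto simp: frob_Qmat_Ymat sum_2 ex_A_def ex_b_def ex_c_def ex_X_def)
  ultimately show ?thesis
    by (simp add: sdp_feasible_def ex_X_def transpose_eq_iff_2)
qed

lemma frob_ex: "frob (Qmat ex_A0 ex_b0 0) (Ymat ex_x ex_X) = 1/2"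
  by (simp add: frob_Qmat_Ymat sum_2 inner_vec_def ex_A0_def mat_def ex_b0_def ex_x_def ex_X_def)

lemma Opt_SDP_ex_less_Opt_ex: "Opt_SDP ex_A0 ex_b0 0 ex_A ex_b ex_c {} < Opt ex_A0 ex_b0 0 ex_A ex_b ex_c {}"
proof -
  have "Opt_SDP ex_A0 ex_b0 0 ex_A ex_b ex_c {} \<le> ereal (frob (Qmat ex_A0 ex_b0 0) (Ymat ex_x ex_X))"
    by (rule Opt_SDP_le[OF sdp_feasible_ex])
  also have "\<dots> < ereal 1"
    by (simp add: frob_ex)
  also have "\<dots> \<le> Opt ex_A0 ex_b0 0 ex_A ex_b ex_c {}"
    by (simp add: Opt_ge qcqp_feasible_ex_value)
  finally show ?thesis .
qed

lemma D_SDP_ex_not_in_convex_hull: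
  "(ex_x, 1/4) \<in> D_SDP ex_A0 ex_b0 0 ex_A ex_b ex_c {} - convex hull Dset ex_A0 ex_b0 0 ex_A ex_b ex_c {}"
proof
  have "frob (Qmat ex_A0 ex_b0 0) (Ymat ex_x ex_X) \<le> 2 * (1/4)"
    by (simp add: frob_ex)
  with sdp_feasible_ex show "(ex_x, 1/4) \<in> D_SDP ex_A0 ex_b0 0 ex_A ex_b ex_c {}"
    unfolding D_SDP_def by blast
  have "convex hull Dset ex_A0 ex_b0 0 ex_A ex_b ex_c {} \<subseteq> {(x, t). 1 \<le> 2 * t}"
    using qcqp_feasible_ex_value by (intro convex_hull_Dset_subset) simp
  then show "(ex_x, 1/4) \<notin> convex hull Dset ex_A0 ex_b0 0 ex_A ex_b ex_c {}"
    by auto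
qed

theorem mainTheorem16:
  shows "\<exists>(A0 :: real^2^2) (b0 :: real^2) (c0 :: real)
           (A :: 2 \<Rightarrow> real^2^2) (b :: 2 \<Rightarrow> real^2) (c :: 2 \<Rightarrow> real) (I :: 2 set).
    transpose A0 = A0 \<and> (\<forall>i. transpose (A i) = A i)
    \<and> assumptionA A0 A b c I
    \<and> assumptionB A0 b0 c0 A b c I
    \<and> eig_multiplicity A0 A = 1
    \<and> (\<forall>F. semidefinite_face A0 A I F \<longrightarrow>
           int (eig_multiplicity A0 A) \<ge> aff_dim (bgam b0 b ` F) + 1)
    \<and> Opt A0 b0 c0 A b c I \<noteq> Opt_SDP A0 b0 c0 A b c I
    \<and> convex hull (Dset A0 b0 c0 A b c I) \<noteq> D_SDP A0 b0 c0 A b c I"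
proof (intro exI conjI allI impI)
  show sym: "transpose ex_A0 = ex_A0" "transpose (ex_A i) = ex_A i" for i
    by (simp_all add: ex_A0_def transpose_mat ex_A_symmetric)
  show "assumptionA ex_A0 ex_A ex_b ex_c {}"
    using qcqp_feasible_ex_nonempty
    by (auto simp: assumptionA_def Agam_0 ex_A0_def pd_mat_1 intro!: exI[of _ 0])
  show "assumptionB ex_A0 ex_b0 0 ex_A ex_b ex_c {}"
    by (simp add: assumptionB_if_compact_Gamma Gamma_ex)
  show mult: "eig_multiplicity ex_A0 ex_A = 1"
    by (rule eig_multiplicity_eq_1[where l = 1 and p = 1 and q = 2]) (use sym in \<open>auto simp: ex_A_def\<close>)
  show "int (eig_multiplicity ex_A0 ex_A) \<ge> aff_dim (bgam ex_b0 ex_b ` F) + 1"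
    if "semidefinite_face ex_A0 ex_A {} F" for F
    using that by (simp add: mult semidefinite_face_def bgam_image_eq ex_b_def)
  show "Opt ex_A0 ex_b0 0 ex_A ex_b ex_c {} \<noteq> Opt_SDP ex_A0 ex_b0 0 ex_A ex_b ex_c {}"
    using Opt_SDP_ex_less_Opt_ex by simp
  show "convex hull Dset ex_A0 ex_b0 0 ex_A ex_b ex_c {} \<noteq> D_SDP ex_A0 ex_b0 0 ex_A ex_b ex_c {}"
    using D_SDP_ex_not_in_convex_hull by blast
qed

end
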